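(* Let $\alpha>0$, $\lambda>0$ and $\bm{Z}\in\mathbb{R}^{m\times n}$. Then $$\|\bm{Z}\|_*^{\alpha}=\min_{\bm{Z}=\bm{U}\bm{V}^T}\tfrac12\Big(\lambda\|\bm{U}\|_F^{2\alpha}+\tfrac{1}{\lambda}\|\bm{V}\|_F^{2\alpha}\Big),$$ where the minimum is over all real matrices $\bm{U}\in\mathbb{R}^{m\times k}$, $\bm{V}\in\mathbb{R}^{n\times k}$ (any $k$) with $\bm{Z}=\bm{U}\bm{V}^T$. Moreover, if $\bm{Z}=\hat{\bm{U}}\bm{\Sigma}\hat{\bm{V}}^T$ is a (compact) singular value decomposition of $\bm{Z}$, equality holds for $\bm{U}=\lambda^{-1/(2\alpha)}\hat{\bm{U}}\sqrt{\bm{\Sigma}}$ and $\bm{V}=\lambda^{1/(2\alpha)}\hat{\bm{V}}\sqrt{\bm{\Sigma}}$, where $\sqrt{\bm{\Sigma}}$ is the entrywise square root of $\bm{\Sigma}$.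
   Context: $\|\cdot\|_*$ denotes the matrix trace (nuclear) norm, the sum of singular values; $\|\cdot\|_F$ is the Frobenius norm. *)

theory Defs
  imports "Jordan_Normal_Form.Char_Poly"
begin

definition frob_norm :: "real mat \<Rightarrow> real" where
  "frob_norm A = sqrt (\<Sum>i<dim_row A. \<Sum>j<dim_col A. (A $$ (i, j))\<^sup>2)"

text \<open>Nuclear (trace) norm: the sum of the singular values of Z, where the singular
  values are the square roots of the eigenvalues of Z^T Z, counted with
  (algebraic) multiplicity.\<close>
definition nuclear_norm :: "real mat \<Rightarrow> real" where
  "nuclear_norm Z =
     (let A = transpose_mat Z * Z in
       \<Sum>x\<in>{x. eigenvalue A x}. real (order x (char_poly A)) * sqrt x)"

definition compact_svd ::
  "real mat \<Rightarrow> nat \<Rightarrow> nat \<Rightarrow> nat \<Rightarrow> real mat \<Rightarrow> real mat \<Rightarrow> real mat \<Rightarrow> bool" where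
  "compact_svd Z m n r Uh S Vh \<longleftrightarrow>
     Uh \<in> carrier_mat m r \<and> S \<in> carrier_mat r r \<and> Vh \<in> carrier_mat n r \<and>
     transpose_mat Uh * Uh = 1\<^sub>m r \<and> transpose_mat Vh * Vh = 1\<^sub>m r \<and>
     diagonal_mat S \<and> (\<forall>i<r. S $$ (i, i) > 0) \<and>
     (\<forall>i j. i \<le> j \<and> j < r \<longrightarrow> S $$ (j, j) \<le> S $$ (i, i)) \<and>
     Z = Uh * S * transpose_mat Vh"

end

theory Submission
  imports Defs "HOL-Analysis.L2_Norm"
begin

text \<open>
  By the spectral theorem, Z^T Z has an orthonormal eigenbasis q_1, ..., q_n with eigenvalues
  s_i^2, s_i >= 0. With p_i = Z q_i / s_i this gives Z = sum_i s_i p_i q_i^T, and as the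
  characteristic polynomial of Z^T Z is prod_i (x - s_i^2), the nuclear norm of Z is sum_i s_i.
  For any factorization Z = U V^T we have s_i = (U^T p_i) . (V^T q_i), so Cauchy-Schwarz and
  Bessel's inequality give ||Z||_* <= ||U||_F ||V||_F, which AM-GM turns into the lower bound.
  The balanced factors with columns sqrt s_i p_i and sqrt s_i q_i have squared Frobenius norms
  equal to ||Z||_*; rescaled by lam^(-1/(2 alpha)) and lam^(1/(2 alpha)) they attain the bound.
  A compact SVD is an expansion of this kind, with U_hat sqrt Sigma and V_hat sqrt Sigma as the
  balanced factors.
\<close>

section \<open>Orthonormal families of real vectors\<close>

lemma scalar_prod_eq_sum: "v \<in> carrier_vec n \<Longrightarrow> u \<bullet> v = (\<Sum>a<n. u $ a * v $ a)"
  unfolding scalar_prod_def by (auto simp: atLeast0LessThan)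

lemma scalar_prod_self_nonneg: "0 \<le> (v :: real vec) \<bullet> v"
  using conjugate_square_ge_0_vec[of v] by simp

lemma scalar_prod_self_eq_0_iff: "(v :: real vec) \<in> carrier_vec n \<Longrightarrow> v \<bullet> v = 0 \<longleftrightarrow> v = 0\<^sub>v n"
  using conjugate_square_eq_0_vec[of v n] by simp

lemma scalar_prod_lincomb:
  fixes z :: "'a :: comm_semiring_0 vec"
  assumes "z \<in> carrier_vec n" and "\<forall>j\<in>J. u j \<in> carrier_vec n"
  shows "z \<bullet> vec n (\<lambda>a. \<Sum>j\<in>J. c j * u j $ a) = (\<Sum>j\<in>J. c j * (z \<bullet> u j))"
proof -
  have "z \<bullet> vec n (\<lambda>a. \<Sum>j\<in>J. c j * u j $ a) = (\<Sum>a<n. \<Sum>j\<in>J. c j * (z $ a * u j $ a))"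
    by (simp add: scalar_prod_eq_sum[of _ n] sum_distrib_left mult.left_commute)
  also have "\<dots> = (\<Sum>j\<in>J. c j * (z \<bullet> u j))"
    using assms(2) by (subst sum.swap) (simp add: scalar_prod_eq_sum[of _ n] sum_distrib_left)
  finally show ?thesis .
qed

lemma scalar_prod_symmetric_mat:
  fixes A :: "'a :: comm_semiring_0 mat"
  assumes A: "A \<in> carrier_mat n n" and "transpose_mat A = A"
    and x: "x \<in> carrier_vec n" and y: "y \<in> carrier_vec n"
  shows "x \<bullet> (A *\<^sub>v y) = y \<bullet> (A *\<^sub>v x)"
proof -
  have "x \<bullet> (A *\<^sub>v y) = (A *\<^sub>v x) \<bullet> y"
    using transpose_vec_mult_scalar[OF A y x] assms(2) by simp
  also have "\<dots> = y \<bullet> (A *\<^sub>v x)" using A x y by (intro comm_scalar_prod[of _ n]) auto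
  finally show ?thesis .
qed

lemma scalar_prod_normalize_self:
  fixes v :: "real vec"
  assumes "v \<in> carrier_vec n" and "v \<noteq> 0\<^sub>v n"
  shows "((1 / sqrt (v \<bullet> v)) \<cdot>\<^sub>v v) \<bullet> ((1 / sqrt (v \<bullet> v)) \<cdot>\<^sub>v v) = 1"
proof -
  have "v \<bullet> v > 0"
    using assms scalar_prod_self_nonneg[of v] scalar_prod_self_eq_0_iff[of v n] by linarith
  then show ?thesis using assms(1) by (simp add: field_simps)
qed

definition orthonormal :: "nat \<Rightarrow> nat \<Rightarrow> (nat \<Rightarrow> real vec) \<Rightarrow> bool" where
  "orthonormal n k w \<longleftrightarrow> (\<forall>i<k. w i \<in> carrier_vec n) \<and>
     (\<forall>i<k. \<forall>j<k. w i \<bullet> w j = (if i = j then 1 else 0))"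

lemma orthonormal_carrier: "orthonormal n k w \<Longrightarrow> i < k \<Longrightarrow> w i \<in> carrier_vec n"
  unfolding orthonormal_def by blast

lemma orthonormal_scalar_prod:
  "orthonormal n k w \<Longrightarrow> i < k \<Longrightarrow> j < k \<Longrightarrow> w i \<bullet> w j = (if i = j then 1 else 0)"
  unfolding orthonormal_def by blast

lemma orthonormal_cols:
  assumes "W \<in> carrier_mat n k" and "transpose_mat W * W = 1\<^sub>m k"
  shows "orthonormal n k (col W)"
proof -
  have "col W i \<bullet> col W j = (transpose_mat W * W) $$ (i, j)" if "i < k" "j < k" for i j
    using assms(1) that by simp
  then show ?thesis using assms unfolding orthonormal_def by auto
qed

lemma orthonormal_basis_mat:
  assumes w: "orthonormal n n w"
  defines "W \<equiv> mat n n (\<lambda>(a, i). w i $ a)"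
  shows "transpose_mat W * W = 1\<^sub>m n" and "W * transpose_mat W = 1\<^sub>m n"
proof -
  have W: "W \<in> carrier_mat n n" unfolding W_def by simp
  have "col W i = w i" if "i < n" for i
    using orthonormal_carrier[OF w that] that unfolding W_def by (auto intro!: eq_vecI)
  then show WTW: "transpose_mat W * W = 1\<^sub>m n"
    using W orthonormal_scalar_prod[OF w] by (intro eq_matI) auto
  show "W * transpose_mat W = 1\<^sub>m n"
    using mat_mult_left_right_inverse[OF _ W WTW] W by auto
qed

lemma orthonormal_basis_resolution_identity:
  assumes w: "orthonormal n n w" and "a < n" and "b < n"
  shows "(\<Sum>i<n. w i $ a * w i $ b) = (if a = b then 1 else 0)"
  using arg_cong[OF orthonormal_basis_mat(2)[OF w], of "\<lambda>M. M $$ (a, b)"] assms(2,3)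
  by (simp add: scalar_prod_eq_sum[of _ n])

lemma orthonormal_basis_expansion:
  assumes w: "orthonormal n n w" and x: "x \<in> carrier_vec n" and "a < n"
  shows "x $ a = (\<Sum>i<n. (w i \<bullet> x) * w i $ a)"
proof -
  have "(\<Sum>i<n. (w i \<bullet> x) * w i $ a) = (\<Sum>b<n. x $ b * (\<Sum>i<n. w i $ b * w i $ a))"
    by (simp add: scalar_prod_eq_sum[OF x] sum_distrib_left sum_distrib_right mult_ac)
      (rule sum.swap)
  also have "\<dots> = (\<Sum>b<n. x $ b * (if b = a then 1 else 0))"
    using orthonormal_basis_resolution_identity[OF w _ \<open>a < n\<close>] by (intro sum.cong) auto
  also have "\<dots> = x $ a" using \<open>a < n\<close> by (simp add: if_distrib cong: if_cong)
  finally show ?thesis by simp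
qed

lemma orthonormal_basis_vec_eq:
  assumes w: "orthonormal n n w" and "x \<in> carrier_vec n" and "y \<in> carrier_vec n"
    and "\<And>l. l < n \<Longrightarrow> w l \<bullet> x = w l \<bullet> y"
  shows "x = y"
  using assms orthonormal_basis_expansion[OF w] by (intro eq_vecI) auto

lemma orthonormal_basis_mat_eq:
  assumes w: "orthonormal n n w" and M: "M \<in> carrier_mat m n" and N: "N \<in> carrier_mat m n"
    and eq: "\<And>i. i < n \<Longrightarrow> M *\<^sub>v w i = N *\<^sub>v w i"
  shows "M = N"
proof -
  have "row M a = row N a" if "a < m" for a
  proof (rule orthonormal_basis_vec_eq[OF w])
    fix l assume "l < n"
    then have "(M *\<^sub>v w l) $ a = (N *\<^sub>v w l) $ a" using eq by simp
    then show "w l \<bullet> row M a = w l \<bullet> row N a"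
      using M N \<open>a < m\<close> orthonormal_carrier[OF w \<open>l < n\<close>] by (simp add: comm_scalar_prod[of _ n])
  qed (use M N in auto)
  then show ?thesis using M N by (intro eq_matI) (metis carrier_matD index_row(1))+
qed

lemma orthonormal_le: "orthonormal n k w \<Longrightarrow> k \<le> n"
proof (rule ccontr)
  assume w: "orthonormal n k w" and "\<not> k \<le> n"
  then have basis: "orthonormal n n w" and "n < k" unfolding orthonormal_def by auto
  have "w n = 0\<^sub>v n"
    using \<open>n < k\<close> by (intro orthonormal_basis_vec_eq[OF basis])
      (auto simp: orthonormal_carrier[OF w] orthonormal_scalar_prod[OF w])
  then show False using orthonormal_scalar_prod[OF w \<open>n < k\<close> \<open>n < k\<close>] by simp
qed

lemma exists_nonzero_orthogonal_vec:
  fixes w :: "nat \<Rightarrow> real vec"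
  assumes "k < n" and "\<forall>i<k. w i \<in> carrier_vec n"
  shows "\<exists>v. v \<in> carrier_vec n \<and> v \<noteq> 0\<^sub>v n \<and> (\<forall>i<k. w i \<bullet> v = 0)"
proof -
  define c where "c i = (if i < k then w i else 0\<^sub>v n)" for i
  define M where "M = mat\<^sub>r n n (\<lambda>i. if i = k then 0\<^sub>v n else c i)"
  have M: "M \<in> carrier_mat n n" unfolding M_def by auto
  have "det M = 0" unfolding M_def by (rule det_row_0[OF \<open>k < n\<close>]) (use assms in \<open>auto simp: c_def\<close>)
  then obtain v where v: "v \<in> carrier_vec n" "v \<noteq> 0\<^sub>v n" "M *\<^sub>v v = 0\<^sub>v n"
    using det_0_iff_vec_prod_zero[OF M] by auto
  have "w i \<bullet> v = (M *\<^sub>v v) $ i" if "i < k" for i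
    using that assms unfolding M_def c_def by simp
  then show ?thesis using v assms(1) by auto
qed

lemma orthonormal_snoc:
  assumes w: "orthonormal n k w" and u: "u \<in> carrier_vec n" "u \<bullet> u = 1"
    and perp: "\<forall>i<k. w i \<bullet> u = 0"
  shows "orthonormal n (Suc k) (w(k := u))"
proof -
  have "w i \<bullet> u = u \<bullet> w i" if "i < k" for i
    using orthonormal_carrier[OF w that] u by (simp add: comm_scalar_prod[of _ n])
  then show ?thesis
    using w u perp unfolding orthonormal_def by (auto simp: less_Suc_eq)
qed

lemma orthonormal_extend:
  assumes "orthonormal n k w" and "k \<le> n"
  shows "\<exists>w'. orthonormal n n w' \<and> (\<forall>i<k. w' i = w i)"
  using assms
proof (induction "n - k" arbitrary: k w)
  case 0
  then show ?case by auto
next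
  case (Suc d)
  obtain v where v: "v \<in> carrier_vec n" "v \<noteq> 0\<^sub>v n" "\<forall>i<k. w i \<bullet> v = 0"
    using exists_nonzero_orthogonal_vec[of k n w] Suc orthonormal_carrier by fastforce
  define u where "u = (1 / sqrt (v \<bullet> v)) \<cdot>\<^sub>v v"
  have "orthonormal n (Suc k) (w(k := u))"
    using v orthonormal_carrier[OF Suc.prems(1)] unfolding u_def
    by (intro orthonormal_snoc Suc.prems scalar_prod_normalize_self) auto
  moreover have "d = n - Suc k" and "Suc k \<le> n" using Suc.hyps(2) by arith+
  ultimately obtain w' where "orthonormal n n w'" "\<forall>i<Suc k. w' i = (w(k := u)) i"
    using Suc.hyps(1) by blast
  then show ?case by auto
qed

lemma bessel_inequality:
  fixes x :: "real vec" and f :: "nat \<Rightarrow> real vec"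
  assumes x: "x \<in> carrier_vec n" and f: "\<forall>i<r. f i \<in> carrier_vec n"
    and orth: "\<forall>i<r. \<forall>j<r. i \<noteq> j \<longrightarrow> f i \<bullet> f j = 0" and le1: "\<forall>i<r. f i \<bullet> f i \<le> 1"
  shows "(\<Sum>i<r. (x \<bullet> f i)\<^sup>2) \<le> x \<bullet> x"
proof -
  define c where "c i = x \<bullet> f i" for i
  define s where "s = vec n (\<lambda>a. \<Sum>i<r. c i * f i $ a)"
  have s: "s \<in> carrier_vec n" unfolding s_def by simp
  have fs: "f j \<bullet> s = c j * (f j \<bullet> f j)" if "j < r" for j
  proof -
    have "f j \<bullet> s = (\<Sum>i<r. c i * (f j \<bullet> f i))"
      unfolding s_def using f that by (intro scalar_prod_lincomb) auto
    also have "\<dots> = (\<Sum>i<r. if i = j then c j * (f j \<bullet> f j) else 0)"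
      using orth that by (intro sum.cong) auto
    also have "\<dots> = c j * (f j \<bullet> f j)" using that by simp
    finally show ?thesis .
  qed
  have xs: "x \<bullet> s = (\<Sum>i<r. (c i)\<^sup>2)"
    unfolding s_def using x f by (simp add: scalar_prod_lincomb c_def power2_eq_square)
  have "s \<bullet> s = (\<Sum>i<r. c i * (f i \<bullet> s))"
    using s f by (subst (1) s_def) (simp add: scalar_prod_lincomb comm_scalar_prod[of _ n])
  also have "\<dots> \<le> (\<Sum>i<r. (c i)\<^sup>2)"
    using fs le1 by (intro sum_mono)
      (simp add: power2_eq_square mult_left_le mult.assoc[symmetric] del: mult.assoc)
  finally have ss: "s \<bullet> s \<le> (\<Sum>i<r. (c i)\<^sup>2)" .
  have "0 \<le> (x - s) \<bullet> (x - s)" by (rule scalar_prod_self_nonneg)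
  also have "\<dots> = x \<bullet> x - 2 * (x \<bullet> s) + s \<bullet> s"
    using x s by (simp add: minus_scalar_prod_distrib scalar_prod_minus_distrib comm_scalar_prod[of s n x])
  finally show ?thesis using xs ss unfolding c_def by simp
qed

section \<open>The spectral theorem for real symmetric matrices\<close>

lemma real_symmetric_mat_eigenvalue_real:
  fixes C :: "real mat"
  assumes C: "C \<in> carrier_mat m m" and sym: "transpose_mat C = C"
    and ev: "eigenvalue (map_mat complex_of_real C) a"
  shows "Im a = 0"
proof -
  define C' where "C' = map_mat complex_of_real C"
  have C': "C' \<in> carrier_mat m m" unfolding C'_def using C by auto
  obtain v where v: "v \<in> carrier_vec m" "v \<noteq> 0\<^sub>v m" "C' *\<^sub>v v = a \<cdot>\<^sub>v v"
    using ev C' unfolding eigenvalue_def eigenvector_def C'_def by auto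
  have Cij: "C $$ (j, i) = C $$ (i, j)" if "i < m" "j < m" for i j
    using sym C that by (metis carrier_matD index_transpose_mat(1))
  define s where "s = (\<Sum>i<m. \<Sum>j<m. cnj (v $ i) * C' $$ (i, j) * v $ j)"
  have "(C' *\<^sub>v v) $ i = (\<Sum>j<m. C' $$ (i, j) * v $ j)" if "i < m" for i
    using C' v(1) that by (simp add: scalar_prod_eq_sum[of _ m])
  then have "s = (\<Sum>i<m. cnj (v $ i) * (C' *\<^sub>v v) $ i)"
    unfolding s_def by (simp add: sum_distrib_left mult_ac)
  also have "\<dots> = a * (v \<bullet>c v)"
    using v by (simp add: scalar_prod_eq_sum[of _ m] sum_distrib_left mult_ac)
  finally have s_eq: "s = a * (v \<bullet>c v)" .
  \<comment> \<open>the Hermitian form of a real symmetric matrix takes real values\<close>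
  have "cnj s = (\<Sum>j<m. \<Sum>i<m. v $ i * C' $$ (i, j) * cnj (v $ j))"
    unfolding s_def C'_def using C by (subst sum.swap) (simp add: cnj_sum)
  also have "\<dots> = s" unfolding s_def C'_def using C Cij by (auto simp: mult_ac intro!: sum.cong)
  finally have "Im (cnj s) = Im s" by simp
  then have "Im s = 0" by simp
  moreover have "v \<bullet>c v > 0" using v by simp
  ultimately show ?thesis using s_eq by (simp add: less_complex_def)
qed

lemma real_symmetric_mat_has_eigenvector:
  fixes C :: "real mat"
  assumes C: "C \<in> carrier_mat m m" and "0 < m" and sym: "transpose_mat C = C"
  shows "\<exists>\<mu> v. v \<in> carrier_vec m \<and> v \<noteq> 0\<^sub>v m \<and> C *\<^sub>v v = \<mu> \<cdot>\<^sub>v v"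
proof -
  define C' where "C' = map_mat complex_of_real C"
  have C': "C' \<in> carrier_mat m m" unfolding C'_def using C by auto
  obtain as where as: "char_poly C' = (\<Prod>a\<leftarrow>as. [:- a, 1:])" "length as = m"
    using char_poly_factorized[OF C'] by blast
  then obtain a where "a \<in> set as" using \<open>0 < m\<close> by (cases as) auto
  then have root: "poly (char_poly C') a = 0" unfolding as by (simp add: poly_prod_list_zero_iff)
  then have "Im a = 0"
    using real_symmetric_mat_eigenvalue_real[OF C sym] eigenvalue_root_char_poly[OF C']
    unfolding C'_def by blast
  then have a: "a = complex_of_real (Re a)" by (simp add: complex_eq_iff)
  have "char_poly C' = map_poly complex_of_real (char_poly C)"
    unfolding C'_def by (rule of_real_hom.char_poly_hom[OF C])
  then have "poly (char_poly C) (Re a) = 0"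
    using root a by (metis of_real_eq_0_iff of_real_hom.poly_map_poly)
  then have "eigenvalue C (Re a)" using eigenvalue_root_char_poly[OF C] by simp
  then show ?thesis unfolding eigenvalue_def eigenvector_def using C by auto
qed

lemma scalar_prod_orthonormal_basis_tail:
  assumes b: "orthonormal n n b" and "k \<le> n" and "l < n"
  shows "b l \<bullet> vec n (\<lambda>a. \<Sum>j<n - k. y $ j * b (k + j) $ a) = (if k \<le> l then y $ (l - k) else 0)"
proof -
  have "b l \<bullet> vec n (\<lambda>a. \<Sum>j<n - k. y $ j * b (k + j) $ a) = (\<Sum>j<n - k. y $ j * (b l \<bullet> b (k + j)))"
    using orthonormal_carrier[OF b] \<open>l < n\<close> by (intro scalar_prod_lincomb) auto
  also have "\<dots> = (\<Sum>j<n - k. if j = l - k \<and> k \<le> l then y $ (l - k) else 0)"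
    using orthonormal_scalar_prod[OF b] \<open>l < n\<close> by (intro sum.cong) auto
  finally show ?thesis using \<open>l < n\<close> by (auto simp: sum.If_cases)
qed

lemma symmetric_mat_compression_eigenvector:
  fixes A :: "real mat"
  assumes A: "A \<in> carrier_mat n n" and sym: "transpose_mat A = A"
    and b: "orthonormal n n b" and "k \<le> n" and ev: "\<forall>l<k. A *\<^sub>v b l = d l \<cdot>\<^sub>v b l"
    and y: "y \<in> carrier_vec (n - k)"
    and Cy: "mat (n - k) (n - k) (\<lambda>(i, j). b (k + i) \<bullet> (A *\<^sub>v b (k + j))) *\<^sub>v y = \<mu> \<cdot>\<^sub>v y"
  defines "x \<equiv> vec n (\<lambda>a. \<Sum>j<n - k. y $ j * b (k + j) $ a)"
  shows "A *\<^sub>v x = \<mu> \<cdot>\<^sub>v x"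
proof (rule orthonormal_basis_vec_eq[OF b])
  note b_carrier = orthonormal_carrier[OF b]
  have x: "x \<in> carrier_vec n" unfolding x_def by simp
  fix l assume "l < n"
  have coord: "b l \<bullet> x = (if k \<le> l then y $ (l - k) else 0)"
    unfolding x_def using b \<open>k \<le> n\<close> \<open>l < n\<close> by (rule scalar_prod_orthonormal_basis_tail)
  have "b l \<bullet> (A *\<^sub>v x) = x \<bullet> (A *\<^sub>v b l)"
    by (rule scalar_prod_symmetric_mat[OF A sym b_carrier[OF \<open>l < n\<close>] x])
  also have "\<dots> = (A *\<^sub>v b l) \<bullet> x"
    using A b_carrier[OF \<open>l < n\<close>] x by (intro comm_scalar_prod[of _ n]) auto
  also have "\<dots> = \<mu> * (b l \<bullet> x)"
  proof (cases "k \<le> l")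
    case True
    have "(A *\<^sub>v b l) \<bullet> x = (\<Sum>j<n - k. y $ j * ((A *\<^sub>v b l) \<bullet> b (k + j)))"
      unfolding x_def using A b_carrier \<open>l < n\<close> by (intro scalar_prod_lincomb) auto
    also have "\<dots> = (\<Sum>j<n - k. b (k + (l - k)) \<bullet> (A *\<^sub>v b (k + j)) * y $ j)"
    proof (rule sum.cong)
      fix j assume "j \<in> {..<n - k}"
      then have j: "k + j < n" by simp
      have "(A *\<^sub>v b l) \<bullet> b (k + j) = b (k + j) \<bullet> (A *\<^sub>v b l)"
        using A b_carrier \<open>l < n\<close> j by (intro comm_scalar_prod[of _ n]) auto
      also have "\<dots> = b l \<bullet> (A *\<^sub>v b (k + j))"
        using b_carrier \<open>l < n\<close> j by (intro scalar_prod_symmetric_mat[OF A sym]) auto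
      finally show "y $ j * ((A *\<^sub>v b l) \<bullet> b (k + j)) = b (k + (l - k)) \<bullet> (A *\<^sub>v b (k + j)) * y $ j"
        using True by simp
    qed simp
    also have "\<dots> = (mat (n - k) (n - k) (\<lambda>(i, j). b (k + i) \<bullet> (A *\<^sub>v b (k + j))) *\<^sub>v y) $ (l - k)"
      using y \<open>l < n\<close> True by (simp add: scalar_prod_eq_sum[of _ "n - k"])
    also have "\<dots> = \<mu> * y $ (l - k)" using Cy y \<open>l < n\<close> True by simp
    finally show ?thesis using coord True by simp
  qed (use ev b_carrier \<open>l < n\<close> x coord in simp)
  finally show "b l \<bullet> (A *\<^sub>v x) = b l \<bullet> (\<mu> \<cdot>\<^sub>v x)" using b_carrier[OF \<open>l < n\<close>] x by simp
qed (use A in \<open>simp_all add: x_def\<close>)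

lemma symmetric_mat_eigenvector_orthogonal:
  fixes A :: "real mat"
  assumes A: "A \<in> carrier_mat n n" and sym: "transpose_mat A = A"
    and w: "orthonormal n k w" and "k < n" and ev: "\<forall>i<k. A *\<^sub>v w i = d i \<cdot>\<^sub>v w i"
  shows "\<exists>\<mu> x. x \<in> carrier_vec n \<and> x \<noteq> 0\<^sub>v n \<and> (\<forall>i<k. w i \<bullet> x = 0) \<and> A *\<^sub>v x = \<mu> \<cdot>\<^sub>v x"
proof -
  obtain b where b: "orthonormal n n b" and bw: "\<forall>i<k. b i = w i"
    using orthonormal_extend[OF w] \<open>k < n\<close> by fastforce
  note b_carrier = orthonormal_carrier[OF b]
  \<comment> \<open>A restricted to the orthogonal complement of the w i, in the basis b k, ..., b (n - 1)\<close>
  define C where "C = mat (n - k) (n - k) (\<lambda>(i, j). b (k + i) \<bullet> (A *\<^sub>v b (k + j)))"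
  have C: "C \<in> carrier_mat (n - k) (n - k)" unfolding C_def by simp
  have "transpose_mat C = C"
  proof (rule eq_matI)
    fix i j assume "i < dim_row C" "j < dim_col C"
    then show "transpose_mat C $$ (i, j) = C $$ (i, j)"
      using scalar_prod_symmetric_mat[OF A sym b_carrier b_carrier, of "k + j" "k + i"] C
      unfolding C_def by simp
  qed (use C in auto)
  then obtain \<mu> y where y: "y \<in> carrier_vec (n - k)" "y \<noteq> 0\<^sub>v (n - k)" "C *\<^sub>v y = \<mu> \<cdot>\<^sub>v y"
    using real_symmetric_mat_has_eigenvector[OF C] \<open>k < n\<close> by auto
  define x where "x = vec n (\<lambda>a. \<Sum>j<n - k. y $ j * b (k + j) $ a)"
  have coord: "b l \<bullet> x = (if k \<le> l then y $ (l - k) else 0)" if "l < n" for l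
    unfolding x_def using b \<open>k < n\<close> that by (intro scalar_prod_orthonormal_basis_tail) auto
  have "A *\<^sub>v x = \<mu> \<cdot>\<^sub>v x"
    unfolding x_def using A sym b \<open>k < n\<close> y(1,3) bw ev unfolding C_def
    by (intro symmetric_mat_compression_eigenvector) auto
  moreover have "x \<noteq> 0\<^sub>v n"
  proof
    assume "x = 0\<^sub>v n"
    then have "y $ i = 0" if "i < n - k" for i
      using coord[of "k + i"] b_carrier[of "k + i"] that by simp
    then show False using y(1,2) by (auto intro!: eq_vecI)
  qed
  moreover have "w i \<bullet> x = 0" if "i < k" for i using coord[of i] bw \<open>k < n\<close> that by simp
  moreover have "x \<in> carrier_vec n" unfolding x_def by simp
  ultimately show ?thesis by blast
qed

lemma symmetric_mat_orthonormal_eigenbasis: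
  fixes A :: "real mat"
  assumes A: "A \<in> carrier_mat n n" and sym: "transpose_mat A = A"
  shows "\<exists>w d. orthonormal n n w \<and> (\<forall>i<n. A *\<^sub>v w i = d i \<cdot>\<^sub>v w i)"
proof -
  have "\<exists>w d. orthonormal n k w \<and> (\<forall>i<k. A *\<^sub>v w i = d i \<cdot>\<^sub>v w i)" if "k \<le> n" for k
    using that
  proof (induction k)
    case 0
    then show ?case by (auto simp: orthonormal_def)
  next
    case (Suc k)
    then obtain w d where w: "orthonormal n k w" and ev: "\<forall>i<k. A *\<^sub>v w i = d i \<cdot>\<^sub>v w i"
      by auto
    obtain \<mu> x where x: "x \<in> carrier_vec n" "x \<noteq> 0\<^sub>v n" "\<forall>i<k. w i \<bullet> x = 0" "A *\<^sub>v x = \<mu> \<cdot>\<^sub>v x"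
      using symmetric_mat_eigenvector_orthogonal[OF A sym w _ ev] Suc.prems by auto
    define u where "u = (1 / sqrt (x \<bullet> x)) \<cdot>\<^sub>v x"
    have "orthonormal n (Suc k) (w(k := u))"
      using x orthonormal_carrier[OF w] unfolding u_def
      by (intro orthonormal_snoc w scalar_prod_normalize_self) auto
    moreover have "A *\<^sub>v u = \<mu> \<cdot>\<^sub>v u"
      using A x unfolding u_def by (simp add: mult_mat_vec smult_smult_assoc mult.commute)
    moreover have "\<forall>i<Suc k. A *\<^sub>v (w(k := u)) i = (d(k := \<mu>)) i \<cdot>\<^sub>v (w(k := u)) i"
      using ev \<open>A *\<^sub>v u = \<mu> \<cdot>\<^sub>v u\<close> by (simp add: less_Suc_eq)
    ultimately show ?case by blast
  qed
  then show ?thesis by blast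
qed

section \<open>Singular systems and the nuclear norm\<close>

lemma char_poly_orthonormal_eigenbasis:
  fixes A :: "real mat"
  assumes A: "A \<in> carrier_mat n n" and w: "orthonormal n n w"
    and ev: "\<forall>i<n. A *\<^sub>v w i = d i \<cdot>\<^sub>v w i"
  shows "char_poly A = (\<Prod>i\<leftarrow>[0..<n]. [:- d i, 1:])"
proof -
  define W where "W = mat n n (\<lambda>(a, i). w i $ a)"
  define D where "D = mat n n (\<lambda>(i, j). if i = j then d i else 0)"
  have W: "W \<in> carrier_mat n n" and D: "D \<in> carrier_mat n n" unfolding W_def D_def by auto
  note WW = orthonormal_basis_mat[OF w, folded W_def]
  have "A * W = W * D"
  proof (rule eq_matI)
    fix a i assume "a < dim_row (W * D)" "i < dim_col (W * D)"
    then have a: "a < n" and i: "i < n" using W D by auto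
    have "(W * D) $$ (a, i) = (\<Sum>j<n. w j $ a * (if j = i then d j else 0))"
      using a i unfolding W_def D_def by (simp add: scalar_prod_eq_sum[of _ n])
    also have "\<dots> = (A *\<^sub>v w i) $ a"
      using ev i a orthonormal_carrier[OF w i] by (simp add: if_distrib mult.commute cong: if_cong)
    also have "\<dots> = (A * W) $$ (a, i)"
      using A a i orthonormal_carrier[OF w i] unfolding W_def by (simp add: scalar_prod_eq_sum[of _ n])
    finally show "(A * W) $$ (a, i) = (W * D) $$ (a, i)" by simp
  qed (use A W D in auto)
  then have "A = W * D * transpose_mat W"
    using A W D WW(2) assoc_mult_mat[of A n n W n "transpose_mat W" n] by simp
  then have "similar_mat A D"
    using A W D WW by (intro similar_matI[where P = W and Q = "transpose_mat W"]) auto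
  moreover have "upper_triangular D" "diag_mat D = map d [0..<n]"
    unfolding D_def upper_triangular_def diag_mat_def by auto
  ultimately show ?thesis
    using char_poly_similar[of A D] char_poly_upper_triangular[OF D] by (simp add: o_def)
qed

lemma nuclear_norm_eq_sum_sqrt_eigenvalues:
  fixes Z :: "real mat"
  assumes Z: "Z \<in> carrier_mat m n" and w: "orthonormal n n w"
    and ev: "\<forall>i<n. (transpose_mat Z * Z) *\<^sub>v w i = d i \<cdot>\<^sub>v w i"
  shows "nuclear_norm Z = (\<Sum>i<n. sqrt (d i))"
proof -
  define A where "A = transpose_mat Z * Z"
  have A: "A \<in> carrier_mat n n" using Z unfolding A_def by auto
  have cp: "char_poly A = (\<Prod>i\<leftarrow>[0..<n]. [:- d i, 1:])"
    using char_poly_orthonormal_eigenbasis[OF A w] ev unfolding A_def by simp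
  have eigs: "{x. eigenvalue A x} = d ` {..<n}"
    using eigenvalue_root_char_poly[OF A] unfolding cp by (auto simp: poly_prod_list_zero_iff)
  have order: "order x (char_poly A) = (\<Sum>i<n. if d i = x then 1 else 0)" for x
    unfolding cp by (subst order_prod_list)
      (auto simp: order_linear' interv_sum_list_conv_sum_set_nat atLeast0LessThan o_def)
  have "real (order x (char_poly A)) * sqrt x = (\<Sum>i<n. if d i = x then sqrt (d i) else 0)" for x
    unfolding order of_nat_sum sum_distrib_right by (intro sum.cong) auto
  then have "nuclear_norm Z = (\<Sum>x\<in>d ` {..<n}. \<Sum>i<n. if d i = x then sqrt (d i) else 0)"
    unfolding nuclear_norm_def Let_def A_def[symmetric] eigs by simp
  also have "\<dots> = (\<Sum>i<n. \<Sum>x\<in>d ` {..<n}. if d i = x then sqrt (d i) else 0)"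
    by (rule sum.swap)
  also have "\<dots> = (\<Sum>i<n. sqrt (d i))" by (intro sum.cong) auto
  finally show ?thesis .
qed

lemma gram_eigenvector_scalar_prod:
  fixes Z :: "real mat"
  assumes Z: "Z \<in> carrier_mat m n" and x: "x \<in> carrier_vec n" and y: "y \<in> carrier_vec n"
    and ev: "(transpose_mat Z * Z) *\<^sub>v x = d \<cdot>\<^sub>v x"
  shows "(Z *\<^sub>v x) \<bullet> (Z *\<^sub>v y) = d * (x \<bullet> y)"
proof -
  have "(Z *\<^sub>v x) \<bullet> (Z *\<^sub>v y) = (transpose_mat Z *\<^sub>v (Z *\<^sub>v x)) \<bullet> y"
    using transpose_vec_mult_scalar[OF Z y, of "Z *\<^sub>v x"] Z x by simp
  also have "transpose_mat Z *\<^sub>v (Z *\<^sub>v x) = d \<cdot>\<^sub>v x" using Z x ev by simp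
  finally show ?thesis using x y by simp
qed

lemma frob_norm_nonneg: "0 \<le> frob_norm A"
  unfolding frob_norm_def by (simp add: sum_nonneg)

lemma frob_norm_sq_eq_sum_cols:
  assumes U: "U \<in> carrier_mat m k"
  shows "(frob_norm U)\<^sup>2 = (\<Sum>c<k. col U c \<bullet> col U c)"
proof -
  have "(frob_norm U)\<^sup>2 = (\<Sum>a<m. \<Sum>c<k. (U $$ (a, c))\<^sup>2)"
    using U unfolding frob_norm_def by (simp add: sum_nonneg)
  also have "\<dots> = (\<Sum>c<k. col U c \<bullet> col U c)"
    using U by (subst sum.swap) (simp add: scalar_prod_eq_sum[of _ m] power2_eq_square)
  finally show ?thesis .
qed

lemma frob_norm_smult: "frob_norm (c \<cdot>\<^sub>m A) = \<bar>c\<bar> * frob_norm A"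
proof -
  have "(\<Sum>i<dim_row A. \<Sum>j<dim_col A. ((c \<cdot>\<^sub>m A) $$ (i, j))\<^sup>2)
        = c\<^sup>2 * (\<Sum>i<dim_row A. \<Sum>j<dim_col A. (A $$ (i, j))\<^sup>2)"
    by (simp add: sum_distrib_left power_mult_distrib)
  then show ?thesis unfolding frob_norm_def by (simp add: real_sqrt_mult)
qed

definition outer_prod_sum ::
  "nat \<Rightarrow> nat \<Rightarrow> nat \<Rightarrow> (nat \<Rightarrow> real) \<Rightarrow> (nat \<Rightarrow> real vec) \<Rightarrow> (nat \<Rightarrow> real vec) \<Rightarrow> real mat"
  where "outer_prod_sum m n r s p q = mat m n (\<lambda>(a, b). \<Sum>i<r. s i * p i $ a * q i $ b)"

lemma outer_prod_sum_carrier [simp]: "outer_prod_sum m n r s p q \<in> carrier_mat m n"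
  unfolding outer_prod_sum_def by simp

lemma transpose_outer_prod_sum: "transpose_mat (outer_prod_sum m n r s p q) = outer_prod_sum n m r s q p"
  unfolding outer_prod_sum_def by (intro eq_matI) (auto simp: mult_ac)

lemma outer_prod_sum_mult_vec:
  assumes v: "v \<in> carrier_vec n"
  shows "outer_prod_sum m n r s p q *\<^sub>v v = vec m (\<lambda>a. \<Sum>i<r. s i * (q i \<bullet> v) * p i $ a)"
proof (rule eq_vecI)
  fix a assume "a < dim_vec (vec m (\<lambda>a. \<Sum>i<r. s i * (q i \<bullet> v) * p i $ a))"
  then have a: "a < m" by simp
  have "(outer_prod_sum m n r s p q *\<^sub>v v) $ a = (\<Sum>b<n. (\<Sum>i<r. s i * p i $ a * q i $ b) * v $ b)"
    using a v unfolding outer_prod_sum_def by (simp add: scalar_prod_eq_sum[of _ n])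
  also have "\<dots> = (\<Sum>i<r. s i * (q i \<bullet> v) * p i $ a)"
    by (simp add: scalar_prod_eq_sum[OF v] sum_distrib_left sum_distrib_right mult_ac) (rule sum.swap)
  finally show "(outer_prod_sum m n r s p q *\<^sub>v v) $ a = vec m (\<lambda>a. \<Sum>i<r. s i * (q i \<bullet> v) * p i $ a) $ a"
    using a by simp
qed (simp add: outer_prod_sum_def)

lemma outer_prod_sum_mult_vec_single:
  assumes v: "v \<in> carrier_vec n" and "j < r" and "p j \<in> carrier_vec m"
    and orth: "\<forall>i<r. i \<noteq> j \<longrightarrow> q i \<bullet> v = 0"
  shows "outer_prod_sum m n r s p q *\<^sub>v v = (s j * (q j \<bullet> v)) \<cdot>\<^sub>v p j"
proof -
  have "(\<Sum>i<r. s i * (q i \<bullet> v) * p i $ a) = (\<Sum>i<r. if i = j then s j * (q j \<bullet> v) * p j $ a else 0)"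
    for a using orth by (intro sum.cong) auto
  then show ?thesis using assms(2,3) by (auto simp: outer_prod_sum_mult_vec[OF v] intro!: eq_vecI)
qed

lemma outer_prod_sum_mult_vec_orthogonal:
  assumes "v \<in> carrier_vec n" and "\<forall>i<r. q i \<bullet> v = 0"
  shows "outer_prod_sum m n r s p q *\<^sub>v v = 0\<^sub>v m"
  using assms by (auto simp: outer_prod_sum_mult_vec intro!: eq_vecI)

definition scaled_cols_mat :: "nat \<Rightarrow> nat \<Rightarrow> (nat \<Rightarrow> real) \<Rightarrow> (nat \<Rightarrow> real vec) \<Rightarrow> real mat" where
  "scaled_cols_mat m r c p = mat m r (\<lambda>(a, i). c i * p i $ a)"

lemma scaled_cols_mat_carrier [simp]: "scaled_cols_mat m r c p \<in> carrier_mat m r"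
  unfolding scaled_cols_mat_def by simp

lemma scaled_cols_mat_mult_transpose:
  "scaled_cols_mat m r c p * transpose_mat (scaled_cols_mat n r e q) = outer_prod_sum m n r (\<lambda>i. c i * e i) p q"
  unfolding scaled_cols_mat_def outer_prod_sum_def
  by (intro eq_matI) (auto simp: scalar_prod_eq_sum[of _ r] mult_ac)

lemma frob_norm_scaled_cols_mat:
  assumes p: "\<forall>i<r. p i \<in> carrier_vec m"
  shows "(frob_norm (scaled_cols_mat m r c p))\<^sup>2 = (\<Sum>i<r. (c i)\<^sup>2 * (p i \<bullet> p i))"
proof -
  have col: "col (scaled_cols_mat m r c p) i = c i \<cdot>\<^sub>v p i" if "i < r" for i
    using p that unfolding scaled_cols_mat_def by (auto intro!: eq_vecI)
  have "(frob_norm (scaled_cols_mat m r c p))\<^sup>2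
      = (\<Sum>i<r. col (scaled_cols_mat m r c p) i \<bullet> col (scaled_cols_mat m r c p) i)"
    by (rule frob_norm_sq_eq_sum_cols[of _ m]) simp
  also have "\<dots> = (\<Sum>i<r. (c i)\<^sup>2 * (p i \<bullet> p i))"
    using col p by (intro sum.cong) (simp_all add: power2_eq_square)
  finally show ?thesis .
qed

text \<open>
  An unordered compact SVD Z = sum_{i<r} s_i p_i q_i^T that may contain zero singular values;
  the left vector p_i of a zero singular value is 0.
\<close>
definition singular_system ::
  "nat \<Rightarrow> nat \<Rightarrow> real mat \<Rightarrow> nat \<Rightarrow> (nat \<Rightarrow> real) \<Rightarrow> (nat \<Rightarrow> real vec) \<Rightarrow> (nat \<Rightarrow> real vec) \<Rightarrow> bool"
  where "singular_system m n Z r s p q \<longleftrightarrow>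
    Z = outer_prod_sum m n r s p q \<and> orthonormal n r q \<and> (\<forall>i<r. 0 \<le> s i \<and> p i \<in> carrier_vec m) \<and>
    (\<forall>i<r. \<forall>j<r. p i \<bullet> p j = (if i = j \<and> s i \<noteq> 0 then 1 else 0))"

lemma singular_system_mult_vec:
  assumes sys: "singular_system m n Z r s p q" and "j < r"
  shows "Z *\<^sub>v q j = s j \<cdot>\<^sub>v p j"
proof -
  have Z: "Z = outer_prod_sum m n r s p q" and q: "orthonormal n r q" and p: "\<forall>i<r. p i \<in> carrier_vec m"
    using sys unfolding singular_system_def by auto
  have "Z *\<^sub>v q j = (s j * (q j \<bullet> q j)) \<cdot>\<^sub>v p j"
    unfolding Z using \<open>j < r\<close> p orthonormal_carrier[OF q] orthonormal_scalar_prod[OF q]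
    by (intro outer_prod_sum_mult_vec_single) auto
  then show ?thesis using orthonormal_scalar_prod[OF q \<open>j < r\<close> \<open>j < r\<close>] by simp
qed

lemma singular_system_transpose_mult_vec:
  assumes sys: "singular_system m n Z r s p q" and "j < r"
  shows "transpose_mat Z *\<^sub>v p j = s j \<cdot>\<^sub>v q j"
proof -
  have q: "orthonormal n r q" and pp: "\<forall>i<r. \<forall>j<r. p i \<bullet> p j = (if i = j \<and> s i \<noteq> 0 then 1 else 0)"
    and Z: "transpose_mat Z = outer_prod_sum n m r s q p" and p: "\<forall>i<r. p i \<in> carrier_vec m"
    using sys transpose_outer_prod_sum unfolding singular_system_def by auto
  have "transpose_mat Z *\<^sub>v p j = (s j * (p j \<bullet> p j)) \<cdot>\<^sub>v q j"
    unfolding Z using p pp \<open>j < r\<close> orthonormal_carrier[OF q] by (intro outer_prod_sum_mult_vec_single) auto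
  then show ?thesis using pp \<open>j < r\<close> by auto
qed

lemma nuclear_norm_singular_system:
  assumes sys: "singular_system m n Z r s p q"
  shows "nuclear_norm Z = (\<Sum>i<r. s i)"
proof -
  have Z: "Z \<in> carrier_mat m n" and q: "orthonormal n r q" and s: "\<forall>i<r. 0 \<le> s i"
    and p: "\<forall>i<r. p i \<in> carrier_vec m"
    using sys unfolding singular_system_def by auto
  have "r \<le> n" by (rule orthonormal_le[OF q])
  then obtain w where w: "orthonormal n n w" and wq: "\<forall>i<r. w i = q i"
    using orthonormal_extend[OF q] by blast
  \<comment> \<open>the q i extend to an orthonormal eigenbasis of Z^T Z with eigenvalues (s i)^2 and 0\<close>
  define d where "d i = (if i < r then (s i)\<^sup>2 else 0)" for i
  have "(transpose_mat Z * Z) *\<^sub>v w i = d i \<cdot>\<^sub>v w i" if "i < n" for i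
  proof (cases "i < r")
    case True
    then have "(transpose_mat Z * Z) *\<^sub>v w i = transpose_mat Z *\<^sub>v (s i \<cdot>\<^sub>v p i)"
      using Z wq orthonormal_carrier[OF q] singular_system_mult_vec[OF sys] by simp
    also have "\<dots> = (s i)\<^sup>2 \<cdot>\<^sub>v w i"
      using True Z p wq singular_system_transpose_mult_vec[OF sys]
      by (simp add: mult_mat_vec smult_smult_assoc power2_eq_square)
    finally show ?thesis using True unfolding d_def by simp
  next
    case False
    have "q j \<bullet> w i = 0" if "j < r" for j
      using wq that orthonormal_scalar_prod[OF w, of j i] \<open>r \<le> n\<close> False \<open>i < n\<close> by auto
    then have "\<forall>j<r. q j \<bullet> w i = 0" by blast
    then have "Z *\<^sub>v w i = 0\<^sub>v m"
      using sys orthonormal_carrier[OF w that] unfolding singular_system_def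
      by (auto intro: outer_prod_sum_mult_vec_orthogonal)
    then show ?thesis using False Z orthonormal_carrier[OF w that] unfolding d_def
      by (auto intro!: eq_vecI simp: scalar_prod_def)
  qed
  then have "nuclear_norm Z = (\<Sum>i<n. sqrt (d i))"
    by (intro nuclear_norm_eq_sum_sqrt_eigenvalues[OF Z w]) auto
  also have "\<dots> = (\<Sum>i<r. sqrt (d i))"
    using \<open>r \<le> n\<close> by (intro sum.mono_neutral_right) (auto simp: d_def)
  also have "\<dots> = (\<Sum>i<r. s i)" using s by (intro sum.cong) (auto simp: d_def)
  finally show ?thesis .
qed

lemma singular_system_of_gram_eigenbasis:
  fixes Z :: "real mat"
  assumes Z: "Z \<in> carrier_mat m n" and w: "orthonormal n n w"
    and ev: "\<forall>i<n. (transpose_mat Z * Z) *\<^sub>v w i = d i \<cdot>\<^sub>v w i"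
  shows "singular_system m n Z n (\<lambda>i. sqrt (d i)) (\<lambda>i. (1 / sqrt (d i)) \<cdot>\<^sub>v (Z *\<^sub>v w i)) w"
proof -
  note w_carrier = orthonormal_carrier[OF w]
  define z where "z = (\<lambda>i. Z *\<^sub>v w i)"
  define \<sigma> where "\<sigma> = (\<lambda>i. sqrt (d i))"
  define p where "p = (\<lambda>i. (1 / \<sigma> i) \<cdot>\<^sub>v z i)"
  have z: "z i \<in> carrier_vec m" for i unfolding z_def using Z by (intro carrier_vecI) simp
  then have p: "p i \<in> carrier_vec m" for i unfolding p_def by simp
  have zz: "z i \<bullet> z j = (if i = j then d i else 0)" if "i < n" "j < n" for i j
    using gram_eigenvector_scalar_prod[OF Z w_carrier w_carrier] ev orthonormal_scalar_prod[OF w] that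
    unfolding z_def by simp
  have d: "0 \<le> d i" if "i < n" for i
    using zz[OF that that] scalar_prod_self_nonneg[of "z i"] by simp
  \<comment> \<open>where \<sigma> i = 0 also z i = 0, so p i = 0 (as 1 / 0 = 0) is what singular_system demands\<close>
  have \<sigma>_p: "\<sigma> i \<cdot>\<^sub>v p i = z i" if "i < n" for i
  proof (cases "\<sigma> i = 0")
    case True
    then have "z i \<bullet> z i = 0" using zz[OF that that] d[OF that] unfolding \<sigma>_def by simp
    then have "z i = 0\<^sub>v m" using scalar_prod_self_eq_0_iff[OF z] by simp
    then show ?thesis using True unfolding p_def by (auto intro!: eq_vecI)
  qed (use z in \<open>simp add: p_def smult_smult_assoc\<close>)
  have "Z = outer_prod_sum m n n \<sigma> p w"
  proof (rule orthonormal_basis_mat_eq[OF w Z outer_prod_sum_carrier])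
    fix i assume "i < n"
    have "\<forall>j<n. j \<noteq> i \<longrightarrow> w j \<bullet> w i = 0"
      using orthonormal_scalar_prod[OF w _ \<open>i < n\<close>] by simp
    then have "outer_prod_sum m n n \<sigma> p w *\<^sub>v w i = (\<sigma> i * (w i \<bullet> w i)) \<cdot>\<^sub>v p i"
      using \<open>i < n\<close> w_carrier p by (intro outer_prod_sum_mult_vec_single) auto
    then show "Z *\<^sub>v w i = outer_prod_sum m n n \<sigma> p w *\<^sub>v w i"
      using \<sigma>_p \<open>i < n\<close> orthonormal_scalar_prod[OF w] unfolding z_def by simp
  qed
  moreover have "p i \<bullet> p j = (if i = j \<and> \<sigma> i \<noteq> 0 then 1 else 0)" if "i < n" "j < n" for i j
  proof -
    have "p i \<bullet> p j = (1 / \<sigma> i) * (1 / \<sigma> j) * (z i \<bullet> z j)"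
      using z[of i] z[of j] unfolding p_def by (simp add: scalar_prod_smult_distrib[of _ m])
    moreover have "\<sigma> i * \<sigma> i = d i" using d[OF \<open>i < n\<close>] unfolding \<sigma>_def by simp
    ultimately show ?thesis using zz[OF that] by (auto simp: field_simps)
  qed
  moreover have "0 \<le> \<sigma> i" if "i < n" for i using d[OF that] unfolding \<sigma>_def by simp
  ultimately have "singular_system m n Z n \<sigma> p w" using w p unfolding singular_system_def by blast
  then show ?thesis unfolding \<sigma>_def p_def z_def .
qed

lemma singular_system_exists:
  fixes Z :: "real mat"
  assumes Z: "Z \<in> carrier_mat m n"
  shows "\<exists>s p q. singular_system m n Z n s p q"
proof -
  have "transpose_mat (transpose_mat Z * Z) = transpose_mat Z * Z"
    using Z by (simp add: transpose_mult[of _ n m _ n])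
  then obtain w d where "orthonormal n n w" and "\<forall>i<n. (transpose_mat Z * Z) *\<^sub>v w i = d i \<cdot>\<^sub>v w i"
    using symmetric_mat_orthonormal_eigenbasis[of "transpose_mat Z * Z" n] Z by auto
  then show ?thesis using singular_system_of_gram_eigenbasis[OF Z] by blast
qed

lemma nuclear_norm_nonneg:
  assumes "Z \<in> carrier_mat m n"
  shows "0 \<le> nuclear_norm Z"
proof -
  obtain s p q where sys: "singular_system m n Z n s p q"
    using singular_system_exists[OF assms] by blast
  then show ?thesis
    unfolding nuclear_norm_singular_system[OF sys] singular_system_def by (auto intro!: sum_nonneg)
qed

lemma mult_diagonal_mat:
  fixes A D :: "'a :: semiring_0 mat"
  assumes A: "A \<in> carrier_mat k r" and D: "D \<in> carrier_mat r r" and "diagonal_mat D"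
  shows "A * D = mat k r (\<lambda>(a, i). A $$ (a, i) * D $$ (i, i))"
proof (rule eq_matI)
  fix a i assume "a < dim_row (mat k r (\<lambda>(a, i). A $$ (a, i) * D $$ (i, i)))"
    "i < dim_col (mat k r (\<lambda>(a, i). A $$ (a, i) * D $$ (i, i)))"
  then have a: "a < k" and i: "i < r" by auto
  have "(A * D) $$ (a, i) = (\<Sum>j<r. A $$ (a, j) * D $$ (j, i))"
    using A D a i by (simp add: scalar_prod_eq_sum[of _ r])
  also have "\<dots> = (\<Sum>j<r. if j = i then A $$ (a, i) * D $$ (i, i) else 0)"
    using D i \<open>diagonal_mat D\<close> unfolding diagonal_mat_def by (intro sum.cong) auto
  also have "\<dots> = A $$ (a, i) * D $$ (i, i)" using i by simp
  finally show "(A * D) $$ (a, i) = mat k r (\<lambda>(a, i). A $$ (a, i) * D $$ (i, i)) $$ (a, i)"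
    using a i by simp
qed (use A D in auto)

lemma compact_svd_singular_system:
  assumes svd: "compact_svd Z m n r Uh S Vh"
  defines "s \<equiv> \<lambda>i. S $$ (i, i)"
  shows "singular_system m n Z r s (col Uh) (col Vh)"
    and "Uh * map_mat sqrt S = scaled_cols_mat m r (\<lambda>i. sqrt (s i)) (col Uh)"
    and "Vh * map_mat sqrt S = scaled_cols_mat n r (\<lambda>i. sqrt (s i)) (col Vh)"
proof -
  have Uh: "Uh \<in> carrier_mat m r" and S: "S \<in> carrier_mat r r" and Vh: "Vh \<in> carrier_mat n r"
    and UU: "transpose_mat Uh * Uh = 1\<^sub>m r" and VV: "transpose_mat Vh * Vh = 1\<^sub>m r"
    and diag: "diagonal_mat S" and pos: "\<forall>i<r. S $$ (i, i) > 0"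
    and Z: "Z = Uh * S * transpose_mat Vh"
    using svd unfolding compact_svd_def by auto
  have diag_sqrt: "diagonal_mat (map_mat sqrt S)" using diag S unfolding diagonal_mat_def by auto
  have scale: "W * map_mat f S = scaled_cols_mat k r (\<lambda>i. f (s i)) (col W)"
    if "W \<in> carrier_mat k r" "diagonal_mat (map_mat f S)" for W f k
    using mult_diagonal_mat[OF that(1) _ that(2)] that(1) S
    unfolding scaled_cols_mat_def s_def by (auto intro!: eq_matI)
  show "Uh * map_mat sqrt S = scaled_cols_mat m r (\<lambda>i. sqrt (s i)) (col Uh)"
    and "Vh * map_mat sqrt S = scaled_cols_mat n r (\<lambda>i. sqrt (s i)) (col Vh)"
    using scale Uh Vh diag_sqrt by auto
  have "map_mat (\<lambda>x. x) S = S" by (rule eq_matI) auto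
  then have "Uh * S = scaled_cols_mat m r s (col Uh)"
    using scale[OF Uh, of "\<lambda>x. x"] diag by simp
  moreover have "Vh = scaled_cols_mat n r (\<lambda>_. 1) (col Vh)"
    using Vh unfolding scaled_cols_mat_def by (auto intro!: eq_matI)
  ultimately have "Z = scaled_cols_mat m r s (col Uh) * transpose_mat (scaled_cols_mat n r (\<lambda>_. 1) (col Vh))"
    unfolding Z by (rule arg_cong2[where f = "\<lambda>A B. A * transpose_mat B"])
  then have "Z = outer_prod_sum m n r s (col Uh) (col Vh)" by (simp add: scaled_cols_mat_mult_transpose)
  moreover have "orthonormal n r (col Vh)" and Uo: "orthonormal m r (col Uh)"
    using orthonormal_cols Uh UU Vh VV by auto
  ultimately show "singular_system m n Z r s (col Uh) (col Vh)"
    using pos orthonormal_scalar_prod[OF Uo] Uh unfolding singular_system_def s_def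
    by (auto simp: less_imp_le)
qed

lemma singular_system_balanced_factorization:
  assumes sys: "singular_system m n Z r s p q"
  defines "U \<equiv> scaled_cols_mat m r (\<lambda>i. sqrt (s i)) p"
    and "V \<equiv> scaled_cols_mat n r (\<lambda>i. sqrt (s i)) q"
  shows "Z = U * transpose_mat V"
    and "(frob_norm U)\<^sup>2 = nuclear_norm Z" and "(frob_norm V)\<^sup>2 = nuclear_norm Z"
proof -
  have Z: "Z = outer_prod_sum m n r s p q" and q: "orthonormal n r q" and s: "\<forall>i<r. 0 \<le> s i"
    and p: "\<forall>i<r. p i \<in> carrier_vec m"
    and pp: "\<forall>i<r. p i \<bullet> p i = (if s i \<noteq> 0 then 1 else 0)"
    using sys unfolding singular_system_def by auto
  have "U * transpose_mat V = outer_prod_sum m n r (\<lambda>i. sqrt (s i) * sqrt (s i)) p q"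
    unfolding U_def V_def by (rule scaled_cols_mat_mult_transpose)
  also have "\<dots> = Z"
    unfolding Z outer_prod_sum_def using s by (intro eq_matI) (auto intro!: sum.cong)
  finally show "Z = U * transpose_mat V" ..
  show "(frob_norm U)\<^sup>2 = nuclear_norm Z"
    unfolding U_def nuclear_norm_singular_system[OF sys] frob_norm_scaled_cols_mat[OF p]
    using s pp by (intro sum.cong) auto
  show "(frob_norm V)\<^sup>2 = nuclear_norm Z"
    unfolding V_def nuclear_norm_singular_system[OF sys]
    using frob_norm_scaled_cols_mat[of r q n] orthonormal_carrier[OF q] orthonormal_scalar_prod[OF q] s
    by (auto intro!: sum.cong)
qed

section \<open>The variational characterization\<close>

lemma sum_scalar_prod_cauchy_schwarz:
  fixes x y :: "nat \<Rightarrow> real vec"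
  assumes x: "\<forall>i<r. x i \<in> carrier_vec k" and y: "\<forall>i<r. y i \<in> carrier_vec k"
  shows "(\<Sum>i<r. x i \<bullet> y i) \<le> sqrt (\<Sum>i<r. x i \<bullet> x i) * sqrt (\<Sum>i<r. y i \<bullet> y i)"
proof -
  let ?P = "{..<r} \<times> {..<k}"
  have pairs: "(\<Sum>i<r. u i \<bullet> v i) = (\<Sum>ic\<in>?P. u (fst ic) $ snd ic * v (fst ic) $ snd ic)"
    if "\<forall>i<r. v i \<in> carrier_vec k" for u v :: "nat \<Rightarrow> real vec"
    using that by (simp add: scalar_prod_eq_sum[of _ k] sum.cartesian_product case_prod_beta)
  have "(\<Sum>ic\<in>?P. x (fst ic) $ snd ic * y (fst ic) $ snd ic)
      \<le> (\<Sum>ic\<in>?P. \<bar>x (fst ic) $ snd ic\<bar> * \<bar>y (fst ic) $ snd ic\<bar>)"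
    by (intro sum_mono) (simp add: abs_mult[symmetric])
  also have "\<dots> \<le> L2_set (\<lambda>ic. x (fst ic) $ snd ic) ?P * L2_set (\<lambda>ic. y (fst ic) $ snd ic) ?P"
    by (rule L2_set_mult_ineq)
  moreover have "L2_set (\<lambda>ic. u (fst ic) $ snd ic) ?P = sqrt (\<Sum>i<r. u i \<bullet> u i)"
    if "\<forall>i<r. u i \<in> carrier_vec k" for u
    unfolding L2_set_def pairs[OF that] by (simp add: power2_eq_square)
  ultimately show ?thesis using x y pairs[OF y] by simp
qed

lemma sum_sq_transpose_mult_vec_le_frob_norm:
  fixes U :: "real mat" and f :: "nat \<Rightarrow> real vec"
  assumes U: "U \<in> carrier_mat m k" and f: "\<forall>i<r. f i \<in> carrier_vec m"
    and orth: "\<forall>i<r. \<forall>j<r. i \<noteq> j \<longrightarrow> f i \<bullet> f j = 0" and le1: "\<forall>i<r. f i \<bullet> f i \<le> 1"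
  shows "(\<Sum>i<r. (transpose_mat U *\<^sub>v f i) \<bullet> (transpose_mat U *\<^sub>v f i)) \<le> (frob_norm U)\<^sup>2"
proof -
  have "(transpose_mat U *\<^sub>v f i) \<bullet> (transpose_mat U *\<^sub>v f i) = (\<Sum>c<k. (col U c \<bullet> f i)\<^sup>2)"
    if "i < r" for i
  proof -
    have "transpose_mat U *\<^sub>v f i \<in> carrier_vec k" using U f that by simp
    then show ?thesis using U by (simp add: scalar_prod_eq_sum[of _ k] power2_eq_square)
  qed
  then have "(\<Sum>i<r. (transpose_mat U *\<^sub>v f i) \<bullet> (transpose_mat U *\<^sub>v f i))
      = (\<Sum>i<r. \<Sum>c<k. (col U c \<bullet> f i)\<^sup>2)" by simp
  also have "\<dots> = (\<Sum>c<k. \<Sum>i<r. (col U c \<bullet> f i)\<^sup>2)" by (rule sum.swap)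
  also have "\<dots> \<le> (\<Sum>c<k. col U c \<bullet> col U c)"
    using U f orth le1 by (intro sum_mono bessel_inequality) auto
  also have "\<dots> = (frob_norm U)\<^sup>2" using frob_norm_sq_eq_sum_cols[OF U] by simp
  finally show ?thesis .
qed

lemma nuclear_norm_le_frob_norm_mult:
  fixes U V :: "real mat"
  assumes U: "U \<in> carrier_mat m k" and V: "V \<in> carrier_mat n k" and Z: "Z = U * transpose_mat V"
  shows "nuclear_norm Z \<le> frob_norm U * frob_norm V"
proof -
  obtain s p q where sys: "singular_system m n Z n s p q"
    using singular_system_exists[of Z m n] U V Z by auto
  have q: "orthonormal n n q" and p: "\<forall>i<n. p i \<in> carrier_vec m"
    and pp: "\<forall>i<n. \<forall>j<n. p i \<bullet> p j = (if i = j \<and> s i \<noteq> 0 then 1 else 0)"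
    using sys unfolding singular_system_def by auto
  note q_carrier = orthonormal_carrier[OF q]
  \<comment> \<open>s i = p i . (Z q i), which splits along Z = U V^T\<close>
  have "s i = (transpose_mat U *\<^sub>v p i) \<bullet> (transpose_mat V *\<^sub>v q i)" if "i < n" for i
  proof -
    have "s i = p i \<bullet> (Z *\<^sub>v q i)"
      using singular_system_mult_vec[OF sys that] p pp that by auto
    also have "\<dots> = p i \<bullet> (U *\<^sub>v (transpose_mat V *\<^sub>v q i))"
      using U V q_carrier[OF that] unfolding Z by simp
    also have "\<dots> = (transpose_mat U *\<^sub>v p i) \<bullet> (transpose_mat V *\<^sub>v q i)"
      using U V q_carrier[OF that] p that by (simp add: transpose_vec_mult_scalar)
    finally show ?thesis .
  qed
  then have "nuclear_norm Z = (\<Sum>i<n. (transpose_mat U *\<^sub>v p i) \<bullet> (transpose_mat V *\<^sub>v q i))"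
    using nuclear_norm_singular_system[OF sys] by simp
  also have "\<dots> \<le> sqrt (\<Sum>i<n. (transpose_mat U *\<^sub>v p i) \<bullet> (transpose_mat U *\<^sub>v p i))
      * sqrt (\<Sum>i<n. (transpose_mat V *\<^sub>v q i) \<bullet> (transpose_mat V *\<^sub>v q i))"
    using U V p q_carrier by (intro sum_scalar_prod_cauchy_schwarz[where k = k]) auto
  also have "\<dots> \<le> sqrt ((frob_norm U)\<^sup>2) * sqrt ((frob_norm V)\<^sup>2)"
    using U V p pp q_carrier orthonormal_scalar_prod[OF q]
    by (intro mult_mono real_sqrt_le_mono sum_sq_transpose_mult_vec_le_frob_norm real_sqrt_ge_zero
        sum_nonneg scalar_prod_self_nonneg) auto
  finally show ?thesis using frob_norm_nonneg by simp
qed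

lemma am_gm_powr_bound:
  fixes \<alpha> lam x y N :: real
  assumes "\<alpha> > 0" and "lam > 0" and "0 \<le> x" and "0 \<le> y" and "0 \<le> N" and "N \<le> x * y"
  shows "N powr \<alpha> \<le> (1/2) * (lam * x powr (2 * \<alpha>) + (1 / lam) * y powr (2 * \<alpha>))"
proof -
  define a where "a = x powr \<alpha>"
  define b where "b = y powr \<alpha>"
  have "N powr \<alpha> \<le> (x * y) powr \<alpha>" using assms by (intro powr_mono2) auto
  also have "\<dots> = a * b" unfolding a_def b_def using assms by (simp add: powr_mult)
  also have "\<dots> \<le> (1/2) * (lam * a\<^sup>2 + (1 / lam) * b\<^sup>2)"
  proof -
    have "0 \<le> (lam * a - b)\<^sup>2 / lam" using assms by simp
    also have "\<dots> = lam * a\<^sup>2 + (1 / lam) * b\<^sup>2 - 2 * (a * b)"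
      using assms by (simp add: power2_eq_square field_simps)
    finally show ?thesis by simp
  qed
  also have "\<dots> = (1/2) * (lam * x powr (2 * \<alpha>) + (1 / lam) * y powr (2 * \<alpha>))"
    unfolding a_def b_def by (simp add: power2_eq_square powr_add[symmetric])
  finally show ?thesis .
qed

lemma balanced_factorization_rescale:
  fixes \<alpha> lam N :: real and U V :: "real mat"
  assumes "\<alpha> > 0" and "lam > 0" and U: "U \<in> carrier_mat m k" and V: "V \<in> carrier_mat n k"
    and fU: "(frob_norm U)\<^sup>2 = N" and fV: "(frob_norm V)\<^sup>2 = N"
  defines "U' \<equiv> (lam powr (- 1 / (2 * \<alpha>))) \<cdot>\<^sub>m U" and "V' \<equiv> (lam powr (1 / (2 * \<alpha>))) \<cdot>\<^sub>m V"
  shows "U' * transpose_mat V' = U * transpose_mat V"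
    and "N powr \<alpha> = (1/2) * (lam * frob_norm U' powr (2 * \<alpha>) + (1 / lam) * frob_norm V' powr (2 * \<alpha>))"
proof -
  have inv: "lam powr (- 1 / (2 * \<alpha>)) * lam powr (1 / (2 * \<alpha>)) = 1"
    using \<open>lam > 0\<close> by (simp add: powr_add[symmetric])
  have "transpose_mat (c \<cdot>\<^sub>m V) = c \<cdot>\<^sub>m transpose_mat V" for c :: real
    by (intro eq_matI) auto
  then have "U' * transpose_mat V'
      = (lam powr (- 1 / (2 * \<alpha>)) * lam powr (1 / (2 * \<alpha>))) \<cdot>\<^sub>m (U * transpose_mat V)"
    unfolding U'_def V'_def using U V
    by (simp add: mult_smult_assoc_mat mult_smult_distrib[of _ m k _ n]) (intro eq_matI; simp)
  also have "\<dots> = U * transpose_mat V" using inv by (intro eq_matI) auto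
  finally show "U' * transpose_mat V' = U * transpose_mat V" .
  have frob_powr: "frob_norm W powr (2 * \<alpha>) = N powr \<alpha>" if "(frob_norm W)\<^sup>2 = N" for W
  proof -
    have "frob_norm W powr (2 * \<alpha>) = (((frob_norm W)\<^sup>2) powr (1/2)) powr (2 * \<alpha>)"
      using frob_norm_nonneg[of W] by (simp add: powr_half_sqrt)
    also have "\<dots> = N powr \<alpha>" using that by (simp add: powr_powr)
    finally show ?thesis .
  qed
  have scaled: "frob_norm (lam powr e \<cdot>\<^sub>m W) powr (2 * \<alpha>)
      = lam powr (e * (2 * \<alpha>)) * frob_norm W powr (2 * \<alpha>)" for e W
    using frob_norm_nonneg[of W] by (simp add: frob_norm_smult powr_mult powr_powr)
  have "- 1 / (2 * \<alpha>) * (2 * \<alpha>) = - 1" and "1 / (2 * \<alpha>) * (2 * \<alpha>) = 1"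
    using \<open>\<alpha> > 0\<close> by simp_all
  then show "N powr \<alpha> = (1/2) * (lam * frob_norm U' powr (2 * \<alpha>) + (1 / lam) * frob_norm V' powr (2 * \<alpha>))"
    unfolding U'_def V'_def scaled frob_powr[OF fU] frob_powr[OF fV]
    using \<open>lam > 0\<close> by (simp add: powr_minus field_simps)
qed

lemma singular_system_attains_objective:
  fixes \<alpha> lam :: real
  assumes "\<alpha> > 0" and "lam > 0" and sys: "singular_system m n Z r s p q"
    and U: "U = lam powr (- 1 / (2 * \<alpha>)) \<cdot>\<^sub>m scaled_cols_mat m r (\<lambda>i. sqrt (s i)) p"
    and V: "V = lam powr (1 / (2 * \<alpha>)) \<cdot>\<^sub>m scaled_cols_mat n r (\<lambda>i. sqrt (s i)) q"
  shows "U \<in> carrier_mat m r" and "V \<in> carrier_mat n r" and "Z = U * transpose_mat V"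
    and "nuclear_norm Z powr \<alpha> = (1/2) * (lam * frob_norm U powr (2 * \<alpha>) + (1 / lam) * frob_norm V powr (2 * \<alpha>))"
proof -
  note balanced = singular_system_balanced_factorization[OF sys]
  note rescaled = balanced_factorization_rescale[OF assms(1,2) scaled_cols_mat_carrier
      scaled_cols_mat_carrier balanced(2,3), folded U V]
  show "U \<in> carrier_mat m r" and "V \<in> carrier_mat n r" unfolding U V by simp_all
  show "Z = U * transpose_mat V" using rescaled(1) balanced(1) by simp
  show "nuclear_norm Z powr \<alpha> = (1/2) * (lam * frob_norm U powr (2 * \<alpha>) + (1 / lam) * frob_norm V powr (2 * \<alpha>))"
    by (rule rescaled(2))
qed

theorem lemma1:
  fixes \<alpha> lam :: real and Z :: "real mat" and m n :: nat
  assumes "\<alpha> > 0" and "lam > 0" and "Z \<in> carrier_mat m n"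
  defines "obj \<equiv> (%U V. (1/2) * (lam * frob_norm U powr (2 * \<alpha>)
                                   + (1 / lam) * frob_norm V powr (2 * \<alpha>)))"
  shows "(nuclear_norm Z powr \<alpha> \<in>
           {obj U V | k U V. U \<in> carrier_mat m k \<and> V \<in> carrier_mat n k \<and>
                             Z = U * transpose_mat V}) \<and>
         (\<forall>k U V. U \<in> carrier_mat m k \<and> V \<in> carrier_mat n k \<and> Z = U * transpose_mat V
            \<longrightarrow> nuclear_norm Z powr \<alpha> \<le> obj U V) \<and>
         (\<forall>r Uh S Vh. compact_svd Z m n r Uh S Vh \<longrightarrow>
           (let U = (lam powr (- 1 / (2 * \<alpha>))) \<cdot>\<^sub>m (Uh * map_mat sqrt S);
                V = (lam powr (1 / (2 * \<alpha>))) \<cdot>\<^sub>m (Vh * map_mat sqrt S)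
            in Z = U * transpose_mat V \<and> nuclear_norm Z powr \<alpha> = obj U V))"
proof -
  have "nuclear_norm Z powr \<alpha> \<le> obj U V"
    if "U \<in> carrier_mat m k" "V \<in> carrier_mat n k" "Z = U * transpose_mat V" for k U V
    unfolding obj_def using nuclear_norm_nonneg[OF assms(3)] frob_norm_nonneg
    by (intro am_gm_powr_bound[OF assms(1,2)] nuclear_norm_le_frob_norm_mult[OF that])
  moreover have "nuclear_norm Z powr \<alpha> \<in>
      {obj U V | k U V. U \<in> carrier_mat m k \<and> V \<in> carrier_mat n k \<and> Z = U * transpose_mat V}"
  proof -
    obtain s p q where "singular_system m n Z n s p q"
      using singular_system_exists[OF assms(3)] by blast
    from singular_system_attains_objective[OF assms(1,2) this refl refl]
    show ?thesis unfolding obj_def by blast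
  qed
  moreover have "let U = (lam powr (- 1 / (2 * \<alpha>))) \<cdot>\<^sub>m (Uh * map_mat sqrt S);
                     V = (lam powr (1 / (2 * \<alpha>))) \<cdot>\<^sub>m (Vh * map_mat sqrt S)
                 in Z = U * transpose_mat V \<and> nuclear_norm Z powr \<alpha> = obj U V"
    if "compact_svd Z m n r Uh S Vh" for r Uh S Vh
    using singular_system_attains_objective(3,4)[OF assms(1,2) compact_svd_singular_system(1)[OF that]]
      compact_svd_singular_system(2,3)[OF that]
    unfolding Let_def obj_def by simp
  ultimately show ?thesis by blast
qed

end
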